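(* Let $T>0$, $\theta\ge0$, and let $g:[-T,T)^d\times[-T,T)^d\to\mathbb C$ be symmetric and $\theta$-biadditive in $[-T,T)^d\times[-T,T)^d$. Then there is a symmetric, biadditive function $G$ in $[-T,T)^d\times[-T,T)^d$ such that $$|g({\bf x},{\bf y})-G({\bf x},{\bf y})|\le(7d^2-1)\theta\quad\text{for all }{\bf x},{\bf y}\in[-T,T)^d.$$ Moreover, if the projections of $g({\bf x},{\bf y})$ onto each coordinate (i.e. the functions $(x,y)\mapsto g(x{\bf e}_i,y{\bf e}_k)$) are continuous in at least one point (with respect to both arguments), then $G$ is continuous and bilinear in $[-T,T)^d\times[-T,T)^d$.
   Context: ${\bf e}_i$ is the $i$-th standard basis vector. For $\mathcal E\subseteq\mathbb R^d$, $g$ is $\theta$-biadditive in $\mathcal E\times\mathcal E$ if $|g({\bf x}_1+{\bf x}_2,{\bf y})-g({\bf x}_1,{\bf y})-g({\bf x}_2,{\bf y})|\le\theta$ and $|g({\bf x},{\bf y}_1+{\bf y}_2)-g({\bf x},{\bf y}_1)-g({\bf x},{\bf y}_2)|\le\theta$ for all ${\bf x}_1,{\bf x}_2,{\bf y},{\bf x},{\bf y}_1,{\bf y}_2\in\mathcal E$ with ${\bf x}_1+{\bf x}_2\in\mathcal E$ and ${\bf y}_1+{\bf y}_2\in\mathcal E$; biadditive means $0$-biadditive; symmetric means $g({\bf x},{\bf y})=g({\bf y},{\bf x})$ for all ${\bf x},{\bf y}\in\mathcal E$. *)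

theory Defs
  imports "HOL-Analysis.Analysis"
begin

definition cube :: "real \<Rightarrow> (real ^ 'n) set" where
  "cube T = {x. \<forall>i. - T \<le> x $ i \<and> x $ i < T}"

definition biadditive_approx_on ::
  "real \<Rightarrow> 'a::plus set \<Rightarrow> ('a \<Rightarrow> 'a \<Rightarrow> 'b::real_normed_vector) \<Rightarrow> bool" where
  "biadditive_approx_on \<theta> E g \<longleftrightarrow>
     (\<forall>x1\<in>E. \<forall>x2\<in>E. \<forall>y\<in>E. x1 + x2 \<in> E \<longrightarrow>
        norm (g (x1 + x2) y - g x1 y - g x2 y) \<le> \<theta>) \<and>
     (\<forall>x\<in>E. \<forall>y1\<in>E. \<forall>y2\<in>E. y1 + y2 \<in> E \<longrightarrow>
        norm (g x (y1 + y2) - g x y1 - g x y2) \<le> \<theta>)"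

definition biadditive_on :: "'a::plus set \<Rightarrow> ('a \<Rightarrow> 'a \<Rightarrow> 'b::real_normed_vector) \<Rightarrow> bool" where
  "biadditive_on E g \<longleftrightarrow> biadditive_approx_on 0 E g"

definition symmetric_on :: "'a set \<Rightarrow> ('a \<Rightarrow> 'a \<Rightarrow> 'b) \<Rightarrow> bool" where
  "symmetric_on E g \<longleftrightarrow> (\<forall>x\<in>E. \<forall>y\<in>E. g x y = g y x)"

definition bilinear_on :: "'a::real_vector set \<Rightarrow> ('a \<Rightarrow> 'a \<Rightarrow> 'b::real_vector) \<Rightarrow> bool" where
  "bilinear_on E G \<longleftrightarrow> (\<exists>B. bilinear B \<and> (\<forall>x\<in>E. \<forall>y\<in>E. G x y = B x y))"

end

theory Submission
  imports Defs
begin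

text \<open>
  A \<open>\<theta>\<close>-additive function \<open>u\<close> on \<open>[-T,T)\<close> extends to all of \<open>\<real>\<close> by
  \<open>X(n T + r) = u(r) - n u(-T)\<close> with \<open>r \<in> [-T/2,T/2)\<close>, at the price of doubling the defect,
  and Hyers' limit \<open>lim X(2^k x) / 2^k\<close> is an additive function within \<open>3\<theta>\<close> of \<open>u\<close>.
  Doing this in the second and then in the first variable of a \<open>\<theta>\<close>-biadditive \<open>\<phi>\<close> on
  \<open>[-T,T)\<^sup>2\<close> gives a function within \<open>6\<theta>\<close> of \<open>\<phi>\<close> that is additive in each variable on
  all of \<open>\<real>\<^sup>2\<close>, because the inner approximants are \<open>(|t|/T) \<theta>\<close>-additive for every \<open>t\<close>.
  Applying this to the coordinate functions \<open>(s,t) \<mapsto> g(s e\<^sub>i, t e\<^sub>k)\<close> and summing over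
  \<open>i, k\<close> gives \<open>G\<close> with \<open>|g - G| \<le> (7d\<^sup>2 - 1)\<theta>\<close>, and symmetrizing \<open>G\<close> keeps the bound.
  A biadditive function on \<open>\<real>\<^sup>2\<close> that is bounded on a square is \<open>(s,t) \<mapsto> s t c\<close>; continuity
  of a coordinate function at one point bounds its approximant near that point, so then \<open>G\<close>
  is bilinear, hence continuous.
\<close>

definition approx_additive_on :: "real \<Rightarrow> 'a::plus set \<Rightarrow> ('a \<Rightarrow> 'b::real_normed_vector) \<Rightarrow> bool" where
  "approx_additive_on \<theta> S f \<longleftrightarrow> (\<forall>x\<in>S. \<forall>y\<in>S. x + y \<in> S \<longrightarrow> norm (f (x + y) - f x - f y) \<le> \<theta>)"

lemma approx_additive_onD:
  "approx_additive_on \<theta> S f \<Longrightarrow> x \<in> S \<Longrightarrow> y \<in> S \<Longrightarrow> x + y \<in> S \<Longrightarrow> norm (f (x + y) - f x - f y) \<le> \<theta>"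
  unfolding approx_additive_on_def by blast

lemma approx_additive_on_nonneg:
  fixes S :: "'a::monoid_add set"
  assumes "approx_additive_on \<theta> S f" and "0 \<in> S"
  shows "0 \<le> \<theta>"
  using order_trans[OF norm_ge_zero approx_additive_onD[OF assms(1), of 0 0]] assms(2) by simp

lemma approx_additive_on_mono:
  "approx_additive_on \<theta> S f \<Longrightarrow> \<theta> \<le> \<theta>' \<Longrightarrow> approx_additive_on \<theta>' S f"
  unfolding approx_additive_on_def by (meson order_trans)

lemma biadditive_approx_on_iff:
  "biadditive_approx_on \<theta> E g \<longleftrightarrow>
     (\<forall>y\<in>E. approx_additive_on \<theta> E (\<lambda>x. g x y)) \<and> (\<forall>x\<in>E. approx_additive_on \<theta> E (g x))"
  unfolding biadditive_approx_on_def approx_additive_on_def by blast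

lemma biadditive_onI:
  fixes G :: "'a::ab_group_add \<Rightarrow> 'a \<Rightarrow> 'b::real_normed_vector"
  assumes "\<And>y. Modules.additive (\<lambda>x. G x y)" and "\<And>x. Modules.additive (G x)"
  shows "biadditive_on E G"
  using assms unfolding biadditive_on_def biadditive_approx_on_def Modules.additive_def by simp

section \<open>Extension from an interval to the real line\<close>

text \<open>\<open>-u(-T)\<close> stands in for \<open>u(T)\<close>, which lies outside the domain of \<open>u\<close>.\<close>
definition interval_extension :: "real \<Rightarrow> (real \<Rightarrow> 'b::real_vector) \<Rightarrow> real \<Rightarrow> 'b" where
  "interval_extension T u x =
     u (x - of_int (round (x / T)) * T) - of_int (round (x / T)) *\<^sub>R u (-T)"

lemma round_remainder_bounds:
  fixes T :: real
  assumes "T > 0"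
  shows "-T/2 \<le> x - of_int (round (x / T)) * T" and "x - of_int (round (x / T)) * T < T/2"
proof -
  have "x / T - 1/2 < of_int (round (x / T))" "of_int (round (x / T)) \<le> x / T + 1/2"
    by (rule of_int_round_gt, rule of_int_round_le)
  with assms show "-T/2 \<le> x - of_int (round (x / T)) * T" "x - of_int (round (x / T)) * T < T/2"
    by (simp_all add: field_simps)
qed

lemma round_divide_eqI:
  fixes T :: real
  assumes "T > 0" and "-T/2 \<le> w" and "w < T/2"
  shows "round ((of_int m * T + w) / T) = m"
proof (rule round_unique)
  show "(of_int m * T + w) / T - 1/2 < of_int m" "of_int m \<le> (of_int m * T + w) / T + 1/2"
    using assms by (simp_all add: field_simps)
qed

lemma interval_extension_eq:
  assumes "T > 0" and "-T/2 \<le> w" and "w < T/2"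
  shows "interval_extension T u (of_int m * T + w) = u w - of_int m *\<^sub>R u (-T)"
  using round_divide_eqI[OF assms] unfolding interval_extension_def by simp

lemma interval_extension_approx:
  assumes T: "T > 0" and u: "approx_additive_on \<theta> {-T..<T} u" and w: "w \<in> {-T..<T}"
  shows "norm (interval_extension T u (of_int m * T + w) - (u w - of_int m *\<^sub>R u (-T))) \<le> \<theta>"
proof -
  consider "w < -T/2" | "-T/2 \<le> w" "w < T/2" | "T/2 \<le> w" by linarith
  then show ?thesis
  proof cases
    case 1
    have "interval_extension T u (of_int m * T + w) = interval_extension T u (of_int (m - 1) * T + (w + T))"
      by (simp add: algebra_simps)
    also have "\<dots> = u (w + T) - of_int (m - 1) *\<^sub>R u (-T)"
      by (rule interval_extension_eq) (use 1 w T in auto)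
    finally have "interval_extension T u (of_int m * T + w) - (u w - of_int m *\<^sub>R u (-T))
        = - (u ((w + T) + - T) - u (w + T) - u (-T))"
      by (simp add: algebra_simps)
    also have "norm \<dots> \<le> \<theta>"
      unfolding norm_minus_cancel by (rule approx_additive_onD[OF u]) (use 1 w T in auto)
    finally show ?thesis .
  next
    case 2
    then show ?thesis
      using T approx_additive_on_nonneg[OF u] by (simp add: interval_extension_eq)
  next
    case 3
    have "interval_extension T u (of_int m * T + w) = interval_extension T u (of_int (m + 1) * T + (w - T))"
      by (simp add: algebra_simps)
    also have "\<dots> = u (w - T) - of_int (m + 1) *\<^sub>R u (-T)"
      by (rule interval_extension_eq) (use 3 w T in auto)
    finally have "interval_extension T u (of_int m * T + w) - (u w - of_int m *\<^sub>R u (-T))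
        = u (w + - T) - u w - u (-T)"
      by (simp add: algebra_simps)
    also have "norm \<dots> \<le> \<theta>"
      by (rule approx_additive_onD[OF u]) (use 3 w T in auto)
    finally show ?thesis .
  qed
qed

lemma interval_extension_close:
  assumes "T > 0" and "approx_additive_on \<theta> {-T..<T} u" and "x \<in> {-T..<T}"
  shows "norm (interval_extension T u x - u x) \<le> \<theta>"
  using interval_extension_approx[OF assms, of 0] by simp

lemma approx_additive_interval_extension:
  assumes T: "T > 0" and u: "approx_additive_on \<theta> {-T..<T} u"
  shows "approx_additive_on (2 * \<theta>) UNIV (interval_extension T u)"
  unfolding approx_additive_on_def
proof (intro ballI impI)
  fix x y :: real
  define m n where "m = round (x / T)" and "n = round (y / T)"
  define r s where "r = x - of_int m * T" and "s = y - of_int n * T"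
  have r: "-T/2 \<le> r" "r < T/2" and s: "-T/2 \<le> s" "s < T/2"
    using round_remainder_bounds[OF T] unfolding m_def n_def r_def s_def by blast+
  have X: "interval_extension T u x = u r - of_int m *\<^sub>R u (-T)"
    "interval_extension T u y = u s - of_int n *\<^sub>R u (-T)"
    unfolding interval_extension_def m_def n_def r_def s_def by simp_all
  have xy: "x + y = of_int (m + n) * T + (r + s)"
    unfolding r_def s_def by (simp add: algebra_simps)
  have rs: "r \<in> {-T..<T}" "s \<in> {-T..<T}" "r + s \<in> {-T..<T}" using r s by auto
  have "interval_extension T u (x + y) - interval_extension T u x - interval_extension T u y
      = (interval_extension T u (of_int (m + n) * T + (r + s)) - (u (r + s) - of_int (m + n) *\<^sub>R u (-T)))
        + (u (r + s) - u r - u s)"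
    unfolding X xy by (simp add: algebra_simps)
  also have "norm \<dots> \<le> \<theta> + \<theta>"
    by (rule norm_triangle_le[OF add_mono[OF interval_extension_approx[OF T u rs(3)]
          approx_additive_onD[OF u rs]]])
  finally show "norm (interval_extension T u (x + y) - interval_extension T u x - interval_extension T u y)
      \<le> 2 * \<theta>" by simp
qed

lemma norm_interval_extension_le:
  assumes T: "T > 0" and u: "\<And>\<sigma>. \<sigma> \<in> {-T..<T} \<Longrightarrow> norm (u \<sigma>) \<le> \<eta>"
  shows "norm (interval_extension T u x) \<le> (\<bar>x\<bar> / T + 3/2) * \<eta>"
proof -
  define m where "m = round (x / T)"
  have "\<bar>of_int m - x / T\<bar> \<le> 1/2" unfolding m_def by (rule of_int_round_abs_le)
  moreover have "\<bar>x / T\<bar> = \<bar>x\<bar> / T" using T by simp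
  ultimately have m: "\<bar>of_int m\<bar> \<le> \<bar>x\<bar> / T + 1/2"
    using abs_triangle_ineq2[of "of_int m" "x / T"] by linarith
  have rem: "x - of_int m * T \<in> {-T..<T}"
    using round_remainder_bounds[OF T, of x] T unfolding m_def by auto
  have mT: "-T \<in> {-T..<T}" using T by simp
  have "norm (interval_extension T u x) \<le> norm (u (x - of_int m * T)) + \<bar>of_int m\<bar> * norm (u (-T))"
    unfolding interval_extension_def m_def[symmetric]
    using norm_triangle_ineq4[of "u (x - of_int m * T)" "of_int m *\<^sub>R u (-T)"] by simp
  also have "\<dots> \<le> \<eta> + (\<bar>x\<bar> / T + 1/2) * \<eta>"
    using u[OF rem] u[OF mT] m by (intro add_mono mult_mono) auto
  finally show ?thesis by (simp add: algebra_simps)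
qed

section \<open>Hyers' limit\<close>

definition hyers_limit :: "('a::real_vector \<Rightarrow> 'b::real_normed_vector) \<Rightarrow> 'a \<Rightarrow> 'b" where
  "hyers_limit F x = lim (\<lambda>k. F (2^k *\<^sub>R x) /\<^sub>R 2^k)"

lemma hyers_sequence_converges:
  fixes F :: "'a::real_vector \<Rightarrow> 'b::banach"
  assumes F: "approx_additive_on \<epsilon> UNIV F"
  shows "\<exists>l. (\<lambda>k. F (2^k *\<^sub>R x) /\<^sub>R 2^k) \<longlonglongrightarrow> l \<and> norm (l - F x) \<le> \<epsilon>"
proof -
  define s where "s k = F (2^k *\<^sub>R x) /\<^sub>R 2^k" for k :: nat
  define b where "b = (\<lambda>k::nat. \<epsilon> / 2 * (1/2)^k)"
  have step: "norm (s (Suc k) - s k) \<le> b k" for k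
  proof -
    define y where "y = 2^k *\<^sub>R x"
    have "2^Suc k *\<^sub>R x = y + y" unfolding y_def scaleR_2[symmetric] by simp
    then have "s (Suc k) - s k = (F (y + y) - F y - F y) /\<^sub>R 2^Suc k"
      unfolding s_def y_def[symmetric] by (simp add: algebra_simps scaleR_2[symmetric])
    also have "norm \<dots> \<le> \<epsilon> / 2^Suc k"
      using divide_right_mono[OF approx_additive_onD[OF F, of y y], of "2^Suc k"]
      by (simp add: divide_inverse_commute[symmetric])
    finally show ?thesis by (simp add: b_def power_divide)
  qed
  have b_sums: "b sums \<epsilon>"
    unfolding b_def using sums_mult[OF geometric_sums[of "1/2::real"], of "\<epsilon> / 2"] by simp
  have summable: "summable (\<lambda>k. s (Suc k) - s k)"
    using summable_comparison_test'[OF sums_summable[OF b_sums] step] .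
  have "(\<lambda>n. s n - s 0) \<longlonglongrightarrow> (\<Sum>k. s (Suc k) - s k)"
    using summable_LIMSEQ[OF summable] by (simp add: sum_lessThan_telescope)
  then have "(\<lambda>n. s n - s 0 + s 0) \<longlonglongrightarrow> (\<Sum>k. s (Suc k) - s k) + s 0"
    by (rule tendsto_add[OF _ tendsto_const])
  moreover have "s 0 = F x" by (simp add: s_def)
  ultimately have "s \<longlonglongrightarrow> (\<Sum>k. s (Suc k) - s k) + F x" by simp
  moreover have "norm (\<Sum>k. s (Suc k) - s k) \<le> \<epsilon>"
    using norm_suminf_le[OF step sums_summable[OF b_sums]] sums_unique[OF b_sums] by simp
  ultimately show ?thesis unfolding s_def by force
qed

lemma
  fixes F :: "'a::real_vector \<Rightarrow> 'b::banach"
  assumes "approx_additive_on \<epsilon> UNIV F"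
  shows tendsto_hyers_limit: "(\<lambda>k. F (2^k *\<^sub>R x) /\<^sub>R 2^k) \<longlonglongrightarrow> hyers_limit F x"
    and hyers_limit_close: "norm (hyers_limit F x - F x) \<le> \<epsilon>"
  using hyers_sequence_converges[OF assms, of x] unfolding hyers_limit_def by (auto simp: limI)

lemma additive_hyers_limit:
  fixes F :: "'a::real_vector \<Rightarrow> 'b::banach"
  assumes F: "approx_additive_on \<epsilon> UNIV F"
  shows "Modules.additive (hyers_limit F)"
proof
  fix x y
  let ?d = "\<lambda>k. F (2^k *\<^sub>R (x + y)) /\<^sub>R 2^k - F (2^k *\<^sub>R x) /\<^sub>R 2^k - F (2^k *\<^sub>R y) /\<^sub>R 2^k"
  have "?d \<longlonglongrightarrow> hyers_limit F (x + y) - hyers_limit F x - hyers_limit F y"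
    by (intro tendsto_diff tendsto_hyers_limit[OF F])
  moreover have "?d \<longlonglongrightarrow> 0"
  proof (rule Lim_null_comparison)
    have "norm (?d k) \<le> \<epsilon> * (1/2)^k" for k
    proof -
      have "?d k = (F (2^k *\<^sub>R x + 2^k *\<^sub>R y) - F (2^k *\<^sub>R x) - F (2^k *\<^sub>R y)) /\<^sub>R 2^k"
        by (simp add: algebra_simps)
      then show ?thesis
        using approx_additive_onD[OF F, of "2^k *\<^sub>R x" "2^k *\<^sub>R y"]
        by (simp add: power_divide divide_inverse_commute[symmetric] divide_right_mono)
    qed
    then show "\<forall>\<^sub>F k in sequentially. norm (?d k) \<le> \<epsilon> * (1/2)^k" by simp
    show "(\<lambda>k. \<epsilon> * (1/2::real)^k) \<longlonglongrightarrow> 0"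
      by (intro tendsto_mult_right_zero LIMSEQ_power_zero) simp
  qed
  ultimately have "hyers_limit F (x + y) - hyers_limit F x - hyers_limit F y = 0"
    by (rule LIMSEQ_unique)
  then show "hyers_limit F (x + y) = hyers_limit F x + hyers_limit F y"
    by (simp add: algebra_simps)
qed

lemma doubling_limit_norm_le:
  fixes F :: "'a::real_normed_vector \<Rightarrow> 'b::real_normed_vector"
  assumes lim: "(\<lambda>k. F (2^k *\<^sub>R x) /\<^sub>R 2^k) \<longlonglongrightarrow> l"
    and F: "\<And>y. norm (F y) \<le> a * norm y + b"
  shows "norm l \<le> a * norm x"
proof (rule LIMSEQ_le[OF tendsto_norm[OF lim]])
  show "(\<lambda>k. a * norm x + b * (1/2)^k) \<longlonglongrightarrow> a * norm x"
    using tendsto_add[OF tendsto_const[of "a * norm x"]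
        tendsto_mult_right_zero[OF LIMSEQ_power_zero, of "1/2::real" b]]
    by simp
  have "norm (F (2^k *\<^sub>R x) /\<^sub>R 2^k) \<le> a * norm x + b * (1/2)^k" for k :: nat
    using divide_right_mono[OF F[of "2^k *\<^sub>R x"], of "2^k"]
    by (simp add: power_divide add_divide_distrib divide_inverse_commute[symmetric])
  then show "\<exists>N. \<forall>k\<ge>N. norm (F (2^k *\<^sub>R x) /\<^sub>R 2^k) \<le> a * norm x + b * (1/2)^k" by blast
qed

definition additive_approximant :: "real \<Rightarrow> (real \<Rightarrow> 'b::banach) \<Rightarrow> real \<Rightarrow> 'b" where
  "additive_approximant T u = hyers_limit (interval_extension T u)"

lemma additive_additive_approximant:
  assumes "T > 0" and "approx_additive_on \<theta> {-T..<T} u"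
  shows "Modules.additive (additive_approximant T u)"
  unfolding additive_approximant_def
  by (rule additive_hyers_limit[OF approx_additive_interval_extension[OF assms]])

lemma additive_approximant_close:
  assumes T: "T > 0" and u: "approx_additive_on \<theta> {-T..<T} u" and x: "x \<in> {-T..<T}"
  shows "norm (additive_approximant T u x - u x) \<le> 3 * \<theta>"
proof -
  have "norm (additive_approximant T u x - u x) \<le> 2 * \<theta> + \<theta>"
    unfolding additive_approximant_def
    by (rule norm_diff_triangle_le[OF hyers_limit_close[OF approx_additive_interval_extension[OF T u]]
          interval_extension_close[OF T u x]])
  then show ?thesis by simp
qed

lemma additive_approximant_diff_le:
  assumes T: "T > 0"
    and u: "approx_additive_on \<theta>\<^sub>u {-T..<T} u" and v: "approx_additive_on \<theta>\<^sub>v {-T..<T} v"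
    and w: "approx_additive_on \<theta>\<^sub>w {-T..<T} w"
    and uvw: "\<And>\<sigma>. \<sigma> \<in> {-T..<T} \<Longrightarrow> norm (u \<sigma> - v \<sigma> - w \<sigma>) \<le> \<eta>"
  shows "norm (additive_approximant T u x - additive_approximant T v x - additive_approximant T w x)
    \<le> \<bar>x\<bar> / T * \<eta>"
proof -
  let ?X = "interval_extension T (\<lambda>\<sigma>. u \<sigma> - v \<sigma> - w \<sigma>)"
  have X: "?X y = interval_extension T u y - interval_extension T v y - interval_extension T w y" for y
    unfolding interval_extension_def by (simp add: algebra_simps)
  have "(\<lambda>k. ?X (2^k *\<^sub>R x) /\<^sub>R 2^k) \<longlonglongrightarrow>
      additive_approximant T u x - additive_approximant T v x - additive_approximant T w x"
    unfolding X scaleR_diff_right additive_approximant_def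
    by (intro tendsto_diff tendsto_hyers_limit[OF approx_additive_interval_extension[OF T u]]
        tendsto_hyers_limit[OF approx_additive_interval_extension[OF T v]]
        tendsto_hyers_limit[OF approx_additive_interval_extension[OF T w]])
  moreover have "norm (?X y) \<le> \<eta> / T * norm y + 3/2 * \<eta>" for y
    using norm_interval_extension_le[of T "\<lambda>\<sigma>. u \<sigma> - v \<sigma> - w \<sigma>" \<eta> y] T uvw
    by (simp add: algebra_simps)
  ultimately have "norm (additive_approximant T u x - additive_approximant T v x - additive_approximant T w x)
      \<le> \<eta> / T * norm x"
    by (rule doubling_limit_norm_le)
  then show ?thesis by (simp add: mult.commute)
qed

definition biadditive_approximant :: "real \<Rightarrow> (real \<Rightarrow> real \<Rightarrow> 'b::banach) \<Rightarrow> real \<Rightarrow> real \<Rightarrow> 'b" where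
  "biadditive_approximant T \<phi> s t = additive_approximant T (\<lambda>\<sigma>. additive_approximant T (\<phi> \<sigma>) t) s"

context
  fixes T \<theta> :: real and \<phi> :: "real \<Rightarrow> real \<Rightarrow> 'b::banach"
  assumes T: "T > 0" and \<phi>: "biadditive_approx_on \<theta> {-T..<T} \<phi>"
begin

private lemma
  shows approx_additive_left: "t \<in> {-T..<T} \<Longrightarrow> approx_additive_on \<theta> {-T..<T} (\<lambda>\<sigma>. \<phi> \<sigma> t)"
    and approx_additive_right: "s \<in> {-T..<T} \<Longrightarrow> approx_additive_on \<theta> {-T..<T} (\<phi> s)"
  using \<phi> unfolding biadditive_approx_on_iff by blast+

lemma approx_additive_inner_approximant:
  "approx_additive_on (\<bar>t\<bar> / T * \<theta>) {-T..<T} (\<lambda>\<sigma>. additive_approximant T (\<phi> \<sigma>) t)"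
  unfolding approx_additive_on_def
proof (intro ballI impI)
  fix a b assume ab: "a \<in> {-T..<T}" "b \<in> {-T..<T}" "a + b \<in> {-T..<T}"
  show "norm (additive_approximant T (\<phi> (a + b)) t - additive_approximant T (\<phi> a) t
      - additive_approximant T (\<phi> b) t) \<le> \<bar>t\<bar> / T * \<theta>"
    by (rule additive_approximant_diff_le[OF T approx_additive_right approx_additive_right
          approx_additive_right])
      (use ab approx_additive_onD[OF approx_additive_left] in auto)
qed

lemma additive_biadditive_approximant_left: "Modules.additive (\<lambda>s. biadditive_approximant T \<phi> s t)"
  unfolding biadditive_approximant_def
  by (rule additive_additive_approximant[OF T approx_additive_inner_approximant])

lemma additive_biadditive_approximant_right: "Modules.additive (biadditive_approximant T \<phi> s)"
proof
  fix t\<^sub>1 t\<^sub>2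
  let ?h = "\<lambda>t \<sigma>. additive_approximant T (\<phi> \<sigma>) t"
  have "norm (additive_approximant T (?h (t\<^sub>1 + t\<^sub>2)) s - additive_approximant T (?h t\<^sub>1) s
      - additive_approximant T (?h t\<^sub>2) s) \<le> \<bar>s\<bar> / T * 0"
    by (rule additive_approximant_diff_le[OF T approx_additive_inner_approximant
          approx_additive_inner_approximant approx_additive_inner_approximant])
      (simp add: additive.add[OF additive_additive_approximant[OF T approx_additive_right]])
  then show "biadditive_approximant T \<phi> s (t\<^sub>1 + t\<^sub>2)
      = biadditive_approximant T \<phi> s t\<^sub>1 + biadditive_approximant T \<phi> s t\<^sub>2"
    unfolding biadditive_approximant_def by (simp add: algebra_simps)
qed

lemma biadditive_approximant_close:
  assumes s: "s \<in> {-T..<T}" and t: "t \<in> {-T..<T}"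
  shows "norm (biadditive_approximant T \<phi> s t - \<phi> s t) \<le> 6 * \<theta>"
proof -
  have "0 \<le> \<theta>" using approx_additive_on_nonneg[OF approx_additive_right[OF t]] T by simp
  moreover have "\<bar>t\<bar> / T \<le> 1" using t T by auto
  ultimately have "\<bar>t\<bar> / T * \<theta> \<le> \<theta>" using mult_right_mono by fastforce
  then have inner: "approx_additive_on \<theta> {-T..<T} (\<lambda>\<sigma>. additive_approximant T (\<phi> \<sigma>) t)"
    by (rule approx_additive_on_mono[OF approx_additive_inner_approximant])
  have "norm (biadditive_approximant T \<phi> s t - \<phi> s t) \<le> 3 * \<theta> + 3 * \<theta>"
    unfolding biadditive_approximant_def
    by (rule norm_diff_triangle_le[OF additive_approximant_close[OF T inner s]
          additive_approximant_close[OF T approx_additive_right[OF s] t]])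
  then show ?thesis by simp
qed

end

section \<open>Bounded additive functions are linear\<close>

lemma additive_of_int_mult:
  fixes f :: "real \<Rightarrow> 'b::real_vector"
  assumes f: "Modules.additive f"
  shows "f (of_int m * h) = of_int m *\<^sub>R f h"
proof -
  have nat: "f (of_nat n * h) = of_nat n *\<^sub>R f h" for n
    by (induction n) (simp_all add: additive.add[OF f] additive.zero[OF f] algebra_simps)
  show ?thesis
    by (cases m rule: int_cases) (simp_all add: nat additive.minus[OF f] del: of_nat_Suc)
qed

text \<open>\<open>B\<close> vanishes at \<open>\<eta>/n\<close>, so \<open>B(s) = B(r) = B(n r) / n\<close> for some \<open>r \<in> [0, \<eta>/n)\<close>,
  whence \<open>|B(s)| \<le> K/n\<close> for every \<open>n\<close>.\<close>
lemma additive_eq_0_if_bounded_period: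
  fixes B :: "real \<Rightarrow> 'b::real_normed_vector"
  assumes B: "Modules.additive B" and \<eta>: "\<eta> > 0" and "B \<eta> = 0"
    and bounded: "\<And>h. h \<in> {0..\<eta>} \<Longrightarrow> norm (B h) \<le> K"
  shows "B s = 0"
proof -
  have bound: "of_nat n * norm (B s) \<le> K" if n: "n \<ge> 1" for n
  proof -
    define h where "h = \<eta> / of_nat n"
    define m where "m = \<lfloor>s / h\<rfloor>"
    define r where "r = s - of_int m * h"
    have h: "h > 0" "of_nat n * h = \<eta>" using n \<eta> unfolding h_def by auto
    have "of_int m \<le> s / h" "s / h < of_int m + 1"
      using floor_correct[of "s / h"] unfolding m_def by simp_all
    then have r: "0 \<le> r" "r < h"
      using h(1) unfolding r_def by (simp_all add: field_simps)
    have "of_int (int n) *\<^sub>R B h = 0"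
      using additive_of_int_mult[OF B, of "int n" h] h(2) \<open>B \<eta> = 0\<close> by simp
    then have "B h = 0" using n by simp
    then have "B s = B r"
      using additive.add[OF B, of "of_int m * h" r] additive_of_int_mult[OF B, of m h] by (simp add: r_def)
    also have "of_nat n *\<^sub>R B r = B (of_nat n * r)"
      using additive_of_int_mult[OF B, of "int n" r] by simp
    finally have "norm (of_nat n *\<^sub>R B s) = norm (B (of_nat n * r))" by (rule arg_cong)
    then have "of_nat n * norm (B s) = norm (B (of_nat n * r))" by simp
    also have "\<dots> \<le> K"
      using r h by (intro bounded) (auto intro: mult_left_mono[of r h, THEN order_trans])
    finally show ?thesis .
  qed
  show ?thesis
  proof (rule ccontr)
    assume "B s \<noteq> 0"
    then obtain n where "K < of_nat n * norm (B s)" using reals_Archimedean3[of "norm (B s)"] by auto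
    also have "\<dots> \<le> of_nat (Suc n) * norm (B s)" by (simp add: mult_right_mono)
    also have "\<dots> \<le> K" by (rule bound) simp
    finally show False by simp
  qed
qed

lemma additive_bounded_imp_linear:
  fixes f :: "real \<Rightarrow> 'b::real_normed_vector"
  assumes f: "Modules.additive f" and \<eta>: "\<eta> > 0"
    and bounded: "\<And>s. s \<in> {a..a+\<eta>} \<Longrightarrow> norm (f s) \<le> M"
  shows "f x = x *\<^sub>R f 1"
proof -
  define B where "B s = f s - (s / \<eta>) *\<^sub>R f \<eta>" for s
  have "Modules.additive B"
    by unfold_locales (simp add: B_def additive.add[OF f] add_divide_distrib scaleR_add_left algebra_simps)
  moreover have "B \<eta> = 0" using \<eta> by (simp add: B_def)
  moreover have "norm (B h) \<le> 2 * M + norm (f \<eta>)" if h: "h \<in> {0..\<eta>}" for h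
  proof -
    have "f h = f (a + h) - f a" using additive.add[OF f, of a h] by simp
    then have "norm (f h) \<le> M + M"
      using bounded[of "a + h"] bounded[of a] h \<eta> norm_triangle_ineq4[of "f (a + h)" "f a"] by auto
    moreover have "norm ((h / \<eta>) *\<^sub>R f \<eta>) \<le> norm (f \<eta>)"
      using h \<eta> mult_right_mono[of "h / \<eta>" 1 "norm (f \<eta>)"] by simp
    ultimately show ?thesis
      unfolding B_def using norm_triangle_ineq4[of "f h" "(h / \<eta>) *\<^sub>R f \<eta>"] by linarith
  qed
  ultimately have "B x = 0" "B 1 = 0" using additive_eq_0_if_bounded_period[OF _ \<eta>] by blast+
  then show ?thesis using \<eta> by (simp add: B_def)
qed

lemma biadditive_bounded_imp_bilinear:
  fixes \<Phi> :: "real \<Rightarrow> real \<Rightarrow> 'b::real_normed_vector"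
  assumes left: "\<And>t. Modules.additive (\<lambda>s. \<Phi> s t)" and right: "\<And>s. Modules.additive (\<Phi> s)"
    and \<eta>: "\<eta> > 0" and bounded: "\<And>s t. s \<in> {a..a+\<eta>} \<Longrightarrow> t \<in> {b..b+\<eta>} \<Longrightarrow> norm (\<Phi> s t) \<le> M"
  shows "\<Phi> s t = (s * t) *\<^sub>R \<Phi> 1 1"
proof -
  obtain s\<^sub>0 where s\<^sub>0: "s\<^sub>0 \<in> {a..a+\<eta>}" "s\<^sub>0 \<noteq> 0"
    using \<eta> by (cases "a = 0") (auto intro: that[of "a + \<eta>"] that[of a])
  obtain t\<^sub>0 where t\<^sub>0: "t\<^sub>0 \<in> {b..b+\<eta>}" "t\<^sub>0 \<noteq> 0"
    using \<eta> by (cases "b = 0") (auto intro: that[of "b + \<eta>"] that[of b])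
  have near: "\<Phi> s t = t *\<^sub>R \<Phi> s 1" if "s \<in> {a..a+\<eta>}" for s t
    by (rule additive_bounded_imp_linear[OF right \<eta>]) (rule bounded[OF that])
  have linear_left: "\<Phi> s t = s *\<^sub>R \<Phi> 1 t" for s t
  proof (rule additive_bounded_imp_linear[OF left \<eta>])
    fix \<sigma> assume \<sigma>: "\<sigma> \<in> {a..a+\<eta>}"
    have "\<bar>t\<^sub>0\<bar> * norm (\<Phi> \<sigma> 1) \<le> M" using bounded[OF \<sigma> t\<^sub>0(1)] near[OF \<sigma>, of t\<^sub>0] by simp
    then have "norm (\<Phi> \<sigma> 1) \<le> M / \<bar>t\<^sub>0\<bar>" using t\<^sub>0(2) by (simp add: field_simps)
    from mult_left_mono[OF this abs_ge_zero[of t]]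
    show "norm (\<Phi> \<sigma> t) \<le> \<bar>t\<bar> * (M / \<bar>t\<^sub>0\<bar>)" using near[OF \<sigma>, of t] by simp
  qed
  have linear_right: "\<Phi> 1 t = t *\<^sub>R \<Phi> 1 1" for t
  proof (rule scaleR_left_imp_eq[OF s\<^sub>0(2)])
    have "s\<^sub>0 *\<^sub>R \<Phi> 1 t = t *\<^sub>R \<Phi> s\<^sub>0 1"
      using linear_left[of s\<^sub>0 t] near[OF s\<^sub>0(1), of t] by simp
    also have "\<dots> = s\<^sub>0 *\<^sub>R (t *\<^sub>R \<Phi> 1 1)"
      by (subst linear_left) (rule scaleR_left_commute)
    finally show "s\<^sub>0 *\<^sub>R \<Phi> 1 t = s\<^sub>0 *\<^sub>R (t *\<^sub>R \<Phi> 1 1)" .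
  qed
  show ?thesis using linear_left[of s t] linear_right[of t] by simp
qed

lemma continuous_within_square_imp_bounded:
  fixes f :: "real \<times> real \<Rightarrow> 'b::real_normed_vector"
  assumes cont: "continuous (at (x\<^sub>0, y\<^sub>0) within {-T..<T} \<times> {-T..<T}) f"
    and x\<^sub>0: "x\<^sub>0 \<in> {-T..<T}" and y\<^sub>0: "y\<^sub>0 \<in> {-T..<T}"
  obtains \<eta> M where "\<eta> > 0" and "{x\<^sub>0..x\<^sub>0+\<eta>} \<subseteq> {-T..<T}" and "{y\<^sub>0..y\<^sub>0+\<eta>} \<subseteq> {-T..<T}"
    and "\<And>s t. s \<in> {x\<^sub>0..x\<^sub>0+\<eta>} \<Longrightarrow> t \<in> {y\<^sub>0..y\<^sub>0+\<eta>} \<Longrightarrow> norm (f (s, t)) \<le> M"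
proof -
  obtain \<delta> where \<delta>: "\<delta> > 0"
    and near: "\<And>z. z \<in> {-T..<T} \<times> {-T..<T} \<Longrightarrow> dist z (x\<^sub>0, y\<^sub>0) < \<delta> \<Longrightarrow> dist (f z) (f (x\<^sub>0, y\<^sub>0)) < 1"
    using cont unfolding continuous_within_eps_delta by (meson zero_less_one)
  define \<eta> where "\<eta> = min (\<delta> / 4) (min ((T - x\<^sub>0) / 2) ((T - y\<^sub>0) / 2))"
  have "\<eta> > 0" "\<eta> \<le> \<delta> / 4" "\<eta> \<le> (T - x\<^sub>0) / 2" "\<eta> \<le> (T - y\<^sub>0) / 2"
    using \<delta> x\<^sub>0 y\<^sub>0 unfolding \<eta>_def by (auto simp: min_def)
  then have \<eta>: "\<eta> > 0" "2 * \<eta> < \<delta>" "x\<^sub>0 + \<eta> < T" "y\<^sub>0 + \<eta> < T"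
    using x\<^sub>0 y\<^sub>0 by auto
  show ?thesis
  proof (rule that[OF \<eta>(1)])
    show "{x\<^sub>0..x\<^sub>0+\<eta>} \<subseteq> {-T..<T}" "{y\<^sub>0..y\<^sub>0+\<eta>} \<subseteq> {-T..<T}" using x\<^sub>0 y\<^sub>0 \<eta> by auto
    fix s t assume s: "s \<in> {x\<^sub>0..x\<^sub>0+\<eta>}" and t: "t \<in> {y\<^sub>0..y\<^sub>0+\<eta>}"
    have "dist (s, t) (x\<^sub>0, y\<^sub>0) \<le> dist s x\<^sub>0 + dist t y\<^sub>0"
      unfolding dist_Pair_Pair by (rule sqrt_sum_squares_le_sum[OF zero_le_dist zero_le_dist])
    also have "\<dots> < \<delta>" using s t \<eta> by (auto simp: dist_real_def)
    finally have "dist (f (s, t)) (f (x\<^sub>0, y\<^sub>0)) < 1" using s t x\<^sub>0 y\<^sub>0 \<eta> by (intro near) auto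
    then show "norm (f (s, t)) \<le> norm (f (x\<^sub>0, y\<^sub>0)) + 1"
      using norm_triangle_ineq2[of "f (s, t)" "f (x\<^sub>0, y\<^sub>0)"] by (simp add: dist_norm)
  qed
qed

lemma biadditive_approximant_bilinear:
  fixes \<phi> :: "real \<Rightarrow> real \<Rightarrow> 'b::banach"
  assumes T: "T > 0" and \<phi>: "biadditive_approx_on \<theta> {-T..<T} \<phi>"
    and x\<^sub>0: "x\<^sub>0 \<in> {-T..<T}" and y\<^sub>0: "y\<^sub>0 \<in> {-T..<T}"
    and cont: "continuous (at (x\<^sub>0, y\<^sub>0) within {-T..<T} \<times> {-T..<T}) (\<lambda>(s, t). \<phi> s t)"
  shows "biadditive_approximant T \<phi> s t = (s * t) *\<^sub>R biadditive_approximant T \<phi> 1 1"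
proof -
  obtain \<eta> M where \<eta>: "\<eta> > 0" and sub: "{x\<^sub>0..x\<^sub>0+\<eta>} \<subseteq> {-T..<T}" "{y\<^sub>0..y\<^sub>0+\<eta>} \<subseteq> {-T..<T}"
    and bounded: "\<And>s t. s \<in> {x\<^sub>0..x\<^sub>0+\<eta>} \<Longrightarrow> t \<in> {y\<^sub>0..y\<^sub>0+\<eta>} \<Longrightarrow> norm (\<phi> s t) \<le> M"
    using continuous_within_square_imp_bounded[OF cont x\<^sub>0 y\<^sub>0] by (metis case_prod_conv)
  show ?thesis
  proof (rule biadditive_bounded_imp_bilinear[OF additive_biadditive_approximant_left[OF T \<phi>]
        additive_biadditive_approximant_right[OF T \<phi>] \<eta>])
    fix s t assume s: "s \<in> {x\<^sub>0..x\<^sub>0+\<eta>}" and t: "t \<in> {y\<^sub>0..y\<^sub>0+\<eta>}"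
    have "norm (biadditive_approximant T \<phi> s t - \<phi> s t) \<le> 6 * \<theta>"
      using s t sub by (intro biadditive_approximant_close[OF T \<phi>]) auto
    then show "norm (biadditive_approximant T \<phi> s t) \<le> M + 6 * \<theta>"
      using bounded[OF s t] norm_triangle_ineq2[of "biadditive_approximant T \<phi> s t" "\<phi> s t"] by simp
  qed
qed

section \<open>Coordinates in the cube\<close>

lemma axis_add: "axis i (s + t) = axis i s + axis i (t :: 'a::monoid_add)"
  by (auto simp: vec_eq_iff axis_def)

lemma axis_in_cube_iff: "T > 0 \<Longrightarrow> axis i s \<in> cube T \<longleftrightarrow> s \<in> {-T..<T}"
  unfolding cube_def axis_def by (auto split: if_splits)

lemma component_in_cube: "x \<in> cube T \<Longrightarrow> x $ i \<in> {-T..<T}"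
  unfolding cube_def by auto

lemma approx_additive_on_axis:
  assumes T: "T > 0" and f: "approx_additive_on \<theta> (cube T) f"
  shows "approx_additive_on \<theta> {-T..<T} (\<lambda>s. f (axis i s))"
  unfolding approx_additive_on_def
proof (intro ballI impI)
  fix a b assume "a \<in> {-T..<T}" "b \<in> {-T..<T}" "a + b \<in> {-T..<T}"
  then have "axis i a \<in> cube T" "axis i b \<in> cube T" "axis i a + axis i b \<in> cube T"
    unfolding axis_add[symmetric] axis_in_cube_iff[OF T] by auto
  then show "norm (f (axis i (a + b)) - f (axis i a) - f (axis i b)) \<le> \<theta>"
    unfolding axis_add by (rule approx_additive_onD[OF f])
qed

lemma biadditive_approx_on_axis:
  assumes T: "T > 0" and g: "biadditive_approx_on \<theta> (cube T) g"
  shows "biadditive_approx_on \<theta> {-T..<T} (\<lambda>s t. g (axis i s) (axis k t))"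
  unfolding biadditive_approx_on_iff
proof (intro conjI ballI)
  fix t assume "t \<in> {-T..<T}"
  then have "approx_additive_on \<theta> (cube T) (\<lambda>x. g x (axis k t))"
    using g axis_in_cube_iff[OF T] unfolding biadditive_approx_on_iff by blast
  then show "approx_additive_on \<theta> {-T..<T} (\<lambda>s. g (axis i s) (axis k t))"
    by (rule approx_additive_on_axis[OF T])
next
  fix s assume "s \<in> {-T..<T}"
  then have "approx_additive_on \<theta> (cube T) (g (axis i s))"
    using g axis_in_cube_iff[OF T] unfolding biadditive_approx_on_iff by blast
  then show "approx_additive_on \<theta> {-T..<T} (\<lambda>t. g (axis i s) (axis k t))"
    by (rule approx_additive_on_axis[OF T])
qed

lemma approx_additive_on_cube_sum_axis:
  fixes f :: "real ^ 'n \<Rightarrow> 'b::real_normed_vector"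
  assumes T: "T > 0" and f: "approx_additive_on \<theta> (cube T) f" and x: "x \<in> cube T"
  shows "norm (f x - (\<Sum>i\<in>UNIV. f (axis i (x $ i)))) \<le> (real CARD('n) - 1) * \<theta>"
proof -
  define v where "v S = (\<Sum>i\<in>S. axis i (x $ i))" for S
  have v_in_cube: "v S \<in> cube T" for S
    using x T unfolding cube_def v_def by (auto simp: axis_def if_distrib cong: if_cong)
  have "norm (f (v S) - (\<Sum>i\<in>S. f (axis i (x $ i)))) \<le> (real (card S) - 1) * \<theta>"
    if "finite S" "S \<noteq> {}" for S
    using that
  proof (induction S rule: finite_ne_induct)
    case (singleton i)
    then show ?case by (simp add: v_def)
  next
    case (insert j S)
    have axis: "axis j (x $ j) \<in> cube T" using axis_in_cube_iff[OF T] component_in_cube[OF x] by blast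
    have "v (insert j S) = axis j (x $ j) + v S" unfolding v_def using insert by simp
    then have "f (v (insert j S)) - (\<Sum>i\<in>insert j S. f (axis i (x $ i)))
        = (f (axis j (x $ j) + v S) - f (axis j (x $ j)) - f (v S))
          + (f (v S) - (\<Sum>i\<in>S. f (axis i (x $ i))))"
      using insert by simp
    also have "norm \<dots> \<le> \<theta> + (real (card S) - 1) * \<theta>"
      using approx_additive_onD[OF f axis v_in_cube] v_in_cube[of "insert j S"] insert.IH
        \<open>v (insert j S) = axis j (x $ j) + v S\<close>
      by (intro norm_triangle_le add_mono) auto
    finally show ?case using insert by (simp add: algebra_simps)
  qed
  moreover have "v UNIV = x" by (simp add: v_def vec_eq_iff axis_def)
  ultimately show ?thesis by force
qed

definition coordinate_approximant ::
  "real \<Rightarrow> (real ^ 'n \<Rightarrow> real ^ 'n \<Rightarrow> 'b::banach) \<Rightarrow> real ^ 'n \<Rightarrow> real ^ 'n \<Rightarrow> 'b" where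
  "coordinate_approximant T g x y =
     (\<Sum>i\<in>UNIV. \<Sum>k\<in>UNIV. biadditive_approximant T (\<lambda>s t. g (axis i s) (axis k t)) (x $ i) (y $ k))"

context
  fixes T \<theta> :: real and g :: "real ^ 'n \<Rightarrow> real ^ 'n \<Rightarrow> 'b::banach"
  assumes T: "T > 0" and g: "biadditive_approx_on \<theta> (cube T) g"
begin

lemma additive_coordinate_approximant_left: "Modules.additive (\<lambda>x. coordinate_approximant T g x y)"
proof
  fix x\<^sub>1 x\<^sub>2 :: "real ^ 'n"
  note add = additive.add[OF additive_biadditive_approximant_left[OF T biadditive_approx_on_axis[OF T g]]]
  show "coordinate_approximant T g (x\<^sub>1 + x\<^sub>2) y
      = coordinate_approximant T g x\<^sub>1 y + coordinate_approximant T g x\<^sub>2 y"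
    unfolding coordinate_approximant_def by (simp add: add sum.distrib)
qed

lemma additive_coordinate_approximant_right: "Modules.additive (coordinate_approximant T g x)"
proof
  fix y\<^sub>1 y\<^sub>2 :: "real ^ 'n"
  note add = additive.add[OF additive_biadditive_approximant_right[OF T biadditive_approx_on_axis[OF T g]]]
  show "coordinate_approximant T g x (y\<^sub>1 + y\<^sub>2)
      = coordinate_approximant T g x y\<^sub>1 + coordinate_approximant T g x y\<^sub>2"
    unfolding coordinate_approximant_def by (simp add: add sum.distrib)
qed

text \<open>Splitting first \<open>y\<close> and then \<open>x\<close> into coordinates costs \<open>(d - 1) \<theta>\<close> and \<open>d (d - 1) \<theta>\<close>;
  replacing the \<open>d\<^sup>2\<close> coordinate functions by their biadditive approximants costs \<open>6 d\<^sup>2 \<theta>\<close>.\<close>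
lemma coordinate_approximant_close:
  assumes x: "x \<in> cube T" and y: "y \<in> cube T"
  shows "norm (g x y - coordinate_approximant T g x y) \<le> (7 * real CARD('n)^2 - 1) * \<theta>"
proof -
  define d where "d = real CARD('n)"
  let ?a = "\<lambda>i. axis i (x $ i)" and ?b = "\<lambda>k. axis k (y $ k)"
  let ?B = "\<lambda>i k. biadditive_approximant T (\<lambda>s t. g (axis i s) (axis k t)) (x $ i) (y $ k)"
  have in_cube: "?b k \<in> cube T" for k using axis_in_cube_iff[OF T] component_in_cube[OF y] by blast
  have approx_additive:
    "approx_additive_on \<theta> (cube T) (g x)" "approx_additive_on \<theta> (cube T) (\<lambda>z. g z (?b k))"
    for k using g x in_cube unfolding biadditive_approx_on_iff by blast+
  have e1: "norm (g x y - (\<Sum>k\<in>UNIV. g x (?b k))) \<le> (d - 1) * \<theta>"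
    unfolding d_def by (rule approx_additive_on_cube_sum_axis[OF T approx_additive(1) y])
  have e2: "norm (g x (?b k) - (\<Sum>i\<in>UNIV. g (?a i) (?b k))) \<le> (d - 1) * \<theta>" for k
    unfolding d_def by (rule approx_additive_on_cube_sum_axis[OF T approx_additive(2) x])
  have e3: "norm (g (?a i) (?b k) - ?B i k) \<le> 6 * \<theta>" for i k
    using biadditive_approximant_close[OF T biadditive_approx_on_axis[OF T g]
        component_in_cube[OF x] component_in_cube[OF y]]
    by (simp add: norm_minus_commute)
  have "coordinate_approximant T g x y = (\<Sum>k\<in>UNIV. \<Sum>i\<in>UNIV. ?B i k)"
    unfolding coordinate_approximant_def by (rule sum.swap)
  then have "g x y - coordinate_approximant T g x y = (g x y - (\<Sum>k\<in>UNIV. g x (?b k)))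
      + (\<Sum>k\<in>UNIV. g x (?b k) - (\<Sum>i\<in>UNIV. g (?a i) (?b k)))
      + (\<Sum>k\<in>UNIV. \<Sum>i\<in>UNIV. g (?a i) (?b k) - ?B i k)"
    by (simp add: sum_subtractf)
  also have "norm \<dots> \<le> (d - 1) * \<theta> + (\<Sum>k\<in>(UNIV::'n set). (d - 1) * \<theta>)
      + (\<Sum>k\<in>(UNIV::'n set). \<Sum>i\<in>(UNIV::'n set). 6 * \<theta>)"
    by (intro norm_triangle_le add_mono sum_norm_le e1 e2 e3)
  also have "\<dots> = (7 * d^2 - 1) * \<theta>" unfolding d_def by (simp add: algebra_simps power2_eq_square)
  finally show ?thesis unfolding d_def .
qed

lemma bilinear_coordinate_approximant:
  assumes cont: "\<forall>i k. \<exists>x\<^sub>0\<in>{-T..<T}. \<exists>y\<^sub>0\<in>{-T..<T}.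
    continuous (at (x\<^sub>0, y\<^sub>0) within {-T..<T} \<times> {-T..<T}) (\<lambda>(s, t). g (axis i s) (axis k t))"
  shows "bilinear (coordinate_approximant T g)"
proof -
  let ?B = "\<lambda>i k. biadditive_approximant T (\<lambda>s t. g (axis i s) (axis k t))"
  have B: "?B i k s t = (s * t) *\<^sub>R ?B i k 1 1" for i k s t
    using cont biadditive_approximant_bilinear[OF T biadditive_approx_on_axis[OF T g]] by blast
  have "coordinate_approximant T g = (\<lambda>x y. \<Sum>i\<in>UNIV. \<Sum>k\<in>UNIV. (x $ i * y $ k) *\<^sub>R ?B i k 1 1)"
    unfolding coordinate_approximant_def by (subst B) (rule refl)
  then show ?thesis
    unfolding bilinear_def linear_iff
    by (simp add: algebra_simps sum.distrib scaleR_sum_right)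
qed

end

definition symmetrization :: "('a \<Rightarrow> 'a \<Rightarrow> 'b::real_vector) \<Rightarrow> 'a \<Rightarrow> 'a \<Rightarrow> 'b" where
  "symmetrization G x y = (1/2) *\<^sub>R (G x y + G y x)"

lemma symmetric_on_symmetrization: "symmetric_on E (symmetrization G)"
  unfolding symmetric_on_def symmetrization_def by (simp add: add.commute)

lemma biadditive_on_symmetrization:
  assumes "biadditive_on E G"
  shows "biadditive_on E (symmetrization G)"
proof -
  have "G (x\<^sub>1 + x\<^sub>2) y = G x\<^sub>1 y + G x\<^sub>2 y" "G y (x\<^sub>1 + x\<^sub>2) = G y x\<^sub>1 + G y x\<^sub>2"
    if "x\<^sub>1 \<in> E" "x\<^sub>2 \<in> E" "y \<in> E" "x\<^sub>1 + x\<^sub>2 \<in> E" for x\<^sub>1 x\<^sub>2 y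
    using assms that unfolding biadditive_on_def biadditive_approx_on_def by (simp_all add: algebra_simps)
  then show ?thesis
    unfolding biadditive_on_def biadditive_approx_on_def by (simp add: symmetrization_def algebra_simps)
qed

lemma symmetrization_close:
  assumes "symmetric_on E g" and "x \<in> E" and "y \<in> E"
    and "norm (g x y - G x y) \<le> c" and "norm (g y x - G y x) \<le> c"
  shows "norm (g x y - symmetrization G x y) \<le> c"
proof -
  have "g y x = g x y" using assms(1-3) unfolding symmetric_on_def by blast
  then have "g x y - symmetrization G x y = ((1/2) *\<^sub>R g x y + (1/2) *\<^sub>R g y x) - symmetrization G x y"
    unfolding scaleR_right_distrib[symmetric] by simp
  also have "\<dots> = (1/2) *\<^sub>R ((g x y - G x y) + (g y x - G y x))"
    unfolding symmetrization_def by (simp add: algebra_simps)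
  also have "norm \<dots> \<le> (1/2) * (c + c)"
    using assms(4,5) norm_triangle_ineq[of "g x y - G x y" "g y x - G y x"] by simp
  finally show ?thesis by simp
qed

lemma bilinear_symmetrization: "bilinear G \<Longrightarrow> bilinear (symmetrization G)"
  unfolding bilinear_def linear_iff symmetrization_def by (simp add: algebra_simps)

theorem lemma15:
  fixes T \<theta> :: real
    and g :: "real ^ 'n \<Rightarrow> real ^ 'n \<Rightarrow> complex"
  assumes "T > 0" and "\<theta> \<ge> 0"
    and "symmetric_on (cube T) g"
    and "biadditive_approx_on \<theta> (cube T) g"
  shows "\<exists>G :: real ^ 'n \<Rightarrow> real ^ 'n \<Rightarrow> complex.
           symmetric_on (cube T) G \<and> biadditive_on (cube T) G \<and>
           (\<forall>x\<in>cube T. \<forall>y\<in>cube T.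
              norm (g x y - G x y) \<le> (7 * real (CARD('n))^2 - 1) * \<theta>) \<and>
           ((\<forall>i k. \<exists>x0\<in>{-T..<T}. \<exists>y0\<in>{-T..<T}.
                continuous (at (x0, y0) within {-T..<T} \<times> {-T..<T})
                  (\<lambda>(s, t). g (axis i s) (axis k t)))
            \<longrightarrow> continuous_on (cube T \<times> cube T) (\<lambda>(x, y). G x y) \<and>
                bilinear_on (cube T) G)"
proof -
  let ?G = "symmetrization (coordinate_approximant T g)"
  note T = assms(1) and g = assms(4)
  show ?thesis
  proof (intro exI[of _ ?G] conjI ballI impI)
    show "symmetric_on (cube T) ?G" by (rule symmetric_on_symmetrization)
    show "biadditive_on (cube T) ?G"
      by (intro biadditive_on_symmetrization biadditive_onI additive_coordinate_approximant_left[OF T g]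
          additive_coordinate_approximant_right[OF T g])
    show "norm (g x y - ?G x y) \<le> (7 * real (CARD('n))^2 - 1) * \<theta>" if "x \<in> cube T" "y \<in> cube T" for x y
      using that by (intro symmetrization_close[OF assms(3)] coordinate_approximant_close[OF T g])
  next
    assume "\<forall>i k. \<exists>x0\<in>{-T..<T}. \<exists>y0\<in>{-T..<T}.
      continuous (at (x0, y0) within {-T..<T} \<times> {-T..<T}) (\<lambda>(s, t). g (axis i s) (axis k t))"
    then have bilinear: "bilinear ?G"
      by (intro bilinear_symmetrization bilinear_coordinate_approximant[OF T g])
    then show "continuous_on (cube T \<times> cube T) (\<lambda>(x, y). ?G x y)"
      unfolding case_prod_beta
      by (intro bilinear_continuous_on_compose[OF _ _ bilinear] continuous_on_fst continuous_on_snd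
          continuous_on_id)
    show "bilinear_on (cube T) ?G"
      unfolding bilinear_on_def using bilinear by blast
  qed
qed

end
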